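(* Let $H$ be a non-null series-parallel graph and let $C:V(H)\to\mathbb{Z}_{\ge 0}$ be a counter for $H$. Then $H$ has an active vertex, i.e., a vertex $v$ with $\deg_H(v)\le 2$ or $\deg_H(v)\le 3C(v)$.
   Context: Graphs are finite, may have parallel edges, but no loops. A graph is series-parallel if it has no subgraph isomorphic to a subdivision of $K_4$. For $v\in V(H)$, $\deg_H(v)$ is the number of edges incident with $v$ (counting parallel edges with multiplicity) and $\mathrm{val}_H(v)$ is the number of distinct neighbors of $v$. A function $C:V(H)\to\mathbb{Z}_{\ge0}$ is a counter for $H$ if $\deg_H(v)-\mathrm{val}_H(v)\le C(v)$ for every $v\in V(H)$. A vertex $v$ is active (with respect to $C$) if $\deg_H(v)\le 2$ or $\deg_H(v)\le 3C(v)$. *)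

theory Defs
  imports Main
begin

text \<open>A finite multigraph without loops: vertex set V, edge set E (edges are
  abstract objects, so parallel edges are allowed), and ends e = the two
  distinct endpoints of edge e.\<close>

definition multigraph :: "'a set \<Rightarrow> 'e set \<Rightarrow> ('e \<Rightarrow> 'a set) \<Rightarrow> bool" where
  "multigraph V E ends \<longleftrightarrow> finite V \<and> finite E \<and>
     (\<forall>e\<in>E. ends e \<subseteq> V \<and> card (ends e) = 2)"

definition deg :: "'e set \<Rightarrow> ('e \<Rightarrow> 'a set) \<Rightarrow> 'a \<Rightarrow> nat" where
  "deg E ends v = card {e\<in>E. v \<in> ends e}"

definition adj :: "'e set \<Rightarrow> ('e \<Rightarrow> 'a set) \<Rightarrow> 'a \<Rightarrow> 'a \<Rightarrow> bool" where
  "adj E ends u v \<longleftrightarrow> u \<noteq> v \<and> (\<exists>e\<in>E. ends e = {u, v})"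

definition val :: "'a set \<Rightarrow> 'e set \<Rightarrow> ('e \<Rightarrow> 'a set) \<Rightarrow> 'a \<Rightarrow> nat" where
  "val V E ends v = card {u\<in>V. adj E ends v u}"

definition is_counter :: "'a set \<Rightarrow> 'e set \<Rightarrow> ('e \<Rightarrow> 'a set) \<Rightarrow> ('a \<Rightarrow> nat) \<Rightarrow> bool" where
  "is_counter V E ends C \<longleftrightarrow> (\<forall>v\<in>V. deg E ends v - val V E ends v \<le> C v)"

definition is_path :: "'a set \<Rightarrow> 'e set \<Rightarrow> ('e \<Rightarrow> 'a set) \<Rightarrow> 'a list \<Rightarrow> bool" where
  "is_path V E ends p \<longleftrightarrow> p \<noteq> [] \<and> distinct p \<and> set p \<subseteq> V \<and>
     (\<forall>k. Suc k < length p \<longrightarrow> adj E ends (p ! k) (p ! Suc k))"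

definition inner :: "'a list \<Rightarrow> 'a list" where
  "inner p = butlast (tl p)"

definition has_K4_subdivision :: "'a set \<Rightarrow> 'e set \<Rightarrow> ('e \<Rightarrow> 'a set) \<Rightarrow> bool" where
  "has_K4_subdivision V E ends \<longleftrightarrow>
     (\<exists>(b :: nat \<Rightarrow> 'a) (P :: nat \<Rightarrow> nat \<Rightarrow> 'a list).
        inj_on b {..<4} \<and> b ` {..<4} \<subseteq> V \<and>
        (\<forall>i j. i < j \<and> j < 4 \<longrightarrow>
           is_path V E ends (P i j) \<and> hd (P i j) = b i \<and> last (P i j) = b j \<and>
           set (inner (P i j)) \<inter> b ` {..<4} = {}) \<and>
        (\<forall>i j k l. i < j \<and> j < 4 \<and> k < l \<and> l < 4 \<and> (i, j) \<noteq> (k, l) \<longrightarrow>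
           set (inner (P i j)) \<inter> set (P k l) = {}))"

definition series_parallel :: "'a set \<Rightarrow> 'e set \<Rightarrow> ('e \<Rightarrow> 'a set) \<Rightarrow> bool" where
  "series_parallel V E ends \<longleftrightarrow> multigraph V E ends \<and> \<not> has_K4_subdivision V E ends"

definition active :: "'e set \<Rightarrow> ('e \<Rightarrow> 'a set) \<Rightarrow> ('a \<Rightarrow> nat) \<Rightarrow> 'a \<Rightarrow> bool" where
  "active E ends C v \<longleftrightarrow> deg E ends v \<le> 2 \<or> deg E ends v \<le> 3 * C v"

end

theory Submission
  imports Defs
begin

text \<open>If no vertex is active, every vertex has at least three distinct neighbours, since
  \<open>val v \<ge> deg v - C v > 2 deg v / 3 \<ge> 2\<close>; such a graph contains a subdivision of \<open>K\<^sub>4\<close>.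

  For the latter, call a path \<open>P = P\<^sub>0 \<dots> P\<^sub>k\<close> saturated if all neighbours of \<open>P\<^sub>k\<close> lie on it,
  and choose one maximising first the largest index \<open>j < k - 1\<close> of a neighbour of \<open>P\<^sub>k\<close>, then
  its length; \<open>P\<^sub>k\<close> has another neighbour \<open>P\<^sub>i\<close> with \<open>i < j\<close>. Each \<open>P\<^sub>t\<close> with \<open>j < t < k\<close> has an
  ear, a path through vertices off \<open>P\<close> to some \<open>P\<^sub>s\<close> that is not an edge of \<open>P\<close>: otherwise a longest
  detour from a third neighbour of \<open>P\<^sub>t\<close> ends a saturated path beating \<open>P\<close>. Maximality gives
  \<open>s \<noteq> k\<close>, and \<open>s < j\<close> yields a \<open>K\<^sub>4\<close> on \<open>P\<^sub>i\<close> or \<open>P\<^sub>s\<close>, \<open>P\<^sub>j\<close>, \<open>P\<^sub>t\<close>, \<open>P\<^sub>k\<close>. So ears from the window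
  \<open>[j, k)\<close> stay in it. An ear spanning a shortest stretch \<open>[x, y]\<close> of the window is not a shortcut
  of an edge (it would lengthen \<open>P\<close>), and an ear from \<open>P\<^bsub>x+1\<^esub>\<close> either meets it and splices into a
  shorter one, spans a shorter stretch itself, or crosses it, which again yields a \<open>K\<^sub>4\<close>.\<close>

definition segment :: "'a list \<Rightarrow> nat \<Rightarrow> nat \<Rightarrow> 'a list" where
  "segment p a b = map ((!) p) [a..<Suc b]"

lemma length_segment [simp]: "length (segment p a b) = Suc b - a"
  by (auto simp: segment_def)

lemma nth_segment: "n \<le> b - a \<Longrightarrow> a \<le> b \<Longrightarrow> segment p a b ! n = p ! (a + n)"
  by (simp add: segment_def nth_append)

lemma set_segment: "set (segment p a b) = (!) p ` {a..b}"
  by (auto simp: segment_def)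

lemma segment_not_Nil: "a \<le> b \<Longrightarrow> segment p a b \<noteq> []"
  by (simp add: segment_def)

lemma hd_segment: "a \<le> b \<Longrightarrow> hd (segment p a b) = p ! a"
  by (simp add: segment_def hd_map upt_rec)

lemma last_segment: "a \<le> b \<Longrightarrow> last (segment p a b) = p ! b"
  by (simp add: segment_def last_map)

lemma inner_Cons_snoc [simp]: "inner (x # xs @ [y]) = xs"
  by (simp add: inner_def)

lemma set_inner:
  assumes "distinct p" "p \<noteq> []" "hd p \<noteq> last p"
  shows "set (inner p) = set p - {hd p, last p}"
proof -
  obtain x xs y where p: "p = x # xs @ [y]"
    using assms by (metis append_butlast_last_id last_ConsL list.collapse)
  show ?thesis
    using assms(1) unfolding p by auto
qed

lemma inner_segment: "a < b \<Longrightarrow> inner (segment p a b) = map ((!) p) [Suc a..<b]"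
  by (simp add: segment_def upt_conv_Cons)

lemma set_inner_segment: "a < b \<Longrightarrow> set (inner (segment p a b)) = (!) p ` {a<..<b}"
  by (simp add: inner_segment atLeastSucLessThan_greaterThanLessThan)

lemma image_nth_disjoint:
  assumes "distinct p" "A \<inter> B = {}" "\<forall>n\<in>A \<union> B. n < length p"
  shows "(!) p ` A \<inter> (!) p ` B = {}"
  using assms by (auto simp: nth_eq_iff_index_eq)

lemma nth_le_nth_if_sorted:
  "sorted_wrt (<) ns \<Longrightarrow> m \<le> n \<Longrightarrow> n < length ns \<Longrightarrow> ns ! m \<le> (ns ! n :: nat)"
  using sorted_wrt_nth_less[of "(<)" ns m n] by (cases "m = n") auto

lemma inner_segments_disjoint:
  assumes "distinct p" "sorted_wrt (<) ns" "set ns \<subseteq> {..<length p}" "m < n" "Suc n < length ns"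
  shows "set (inner (segment p (ns ! m) (ns ! Suc m))) \<inter> set (inner (segment p (ns ! n) (ns ! Suc n))) = {}"
proof -
  have "ns ! m < ns ! Suc m" "ns ! Suc m \<le> ns ! n" "ns ! n < ns ! Suc n" "ns ! Suc n < length p"
    using assms sorted_wrt_nth_less[OF assms(2)] nth_le_nth_if_sorted[OF assms(2), of "Suc m" n]
    by (auto simp: subset_iff)
  then show ?thesis
    unfolding set_inner_segment[OF \<open>ns ! m < ns ! Suc m\<close>] set_inner_segment[OF \<open>ns ! n < ns ! Suc n\<close>]
    by (intro image_nth_disjoint[OF assms(1)]) auto
qed

lemma inner_segment_disjoint_nodes:
  assumes "distinct p" "sorted_wrt (<) ns" "set ns \<subseteq> {..<length p}" "Suc n < length ns"
  shows "set (inner (segment p (ns ! n) (ns ! Suc n))) \<inter> (!) p ` set ns = {}"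
proof -
  have "ns ! r \<notin> {ns ! n<..<ns ! Suc n}" if "r < length ns" for r
    using nth_le_nth_if_sorted[OF assms(2), of r n] nth_le_nth_if_sorted[OF assms(2), of "Suc n" r]
      assms(4) that by (cases "r \<le> n") auto
  then have "{ns ! n<..<ns ! Suc n} \<inter> set ns = {}"
    by (auto simp: in_set_conv_nth)
  moreover have "ns ! n < ns ! Suc n" "ns ! Suc n < length p"
    using assms sorted_wrt_nth_less[OF assms(2)] by (auto simp: subset_iff)
  ultimately show ?thesis
    using assms(3) unfolding set_inner_segment[OF \<open>ns ! n < ns ! Suc n\<close>]
    by (intro image_nth_disjoint[OF assms(1)]) auto
qed

locale graph =
  fixes V :: "'a set" and E :: "'e set" and ends :: "'e \<Rightarrow> 'a set"
begin

abbreviation adjacent :: "'a \<Rightarrow> 'a \<Rightarrow> bool" where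
  "adjacent \<equiv> adj E ends"

abbreviation path :: "'a list \<Rightarrow> bool" where
  "path \<equiv> is_path V E ends"

lemma adjacent_sym: "adjacent u v \<Longrightarrow> adjacent v u"
  unfolding adj_def by (auto simp: insert_commute)

lemma adjacent_neq: "adjacent u v \<Longrightarrow> u \<noteq> v"
  unfolding adj_def by auto

lemma path_not_Nil: "path p \<Longrightarrow> p \<noteq> []"
  unfolding is_path_def by auto

lemma path_distinct: "path p \<Longrightarrow> distinct p"
  unfolding is_path_def by auto

lemma path_subset: "path p \<Longrightarrow> set p \<subseteq> V"
  unfolding is_path_def by auto

lemma path_singleton [simp]: "path [x] \<longleftrightarrow> x \<in> V"
  unfolding is_path_def by auto

lemma path_Cons_Cons:
  "path (x # y # zs) \<longleftrightarrow> adjacent x y \<and> x \<notin> set (y # zs) \<and> x \<in> V \<and> path (y # zs)"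
  unfolding is_path_def length_Cons Suc_less_eq All_less_Suc2 nth_Cons_0 nth_Cons_Suc by auto

lemma path_append:
  assumes "xs \<noteq> []" "ys \<noteq> []"
  shows "path (xs @ ys) \<longleftrightarrow>
    path xs \<and> path ys \<and> set xs \<inter> set ys = {} \<and> adjacent (last xs) (hd ys)"
  using assms
proof (induction xs rule: induct_list012)
  case (2 x)
  then obtain y zs where "ys = y # zs"
    by (cases ys) auto
  then show ?case
    by (auto simp: path_Cons_Cons)
next
  case (3 x x' xs)
  then show ?case
    by (auto simp: path_Cons_Cons)
qed simp

lemma path_snoc:
  "xs \<noteq> [] \<Longrightarrow> path (xs @ [y]) \<longleftrightarrow> path xs \<and> y \<in> V \<and> y \<notin> set xs \<and> adjacent (last xs) y"
  by (auto simp: path_append)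

lemma path_rev [simp]: "path (rev xs) \<longleftrightarrow> path xs"
proof (induction xs rule: induct_list012)
  case (3 x y zs)
  have "path (rev (x # y # zs)) \<longleftrightarrow> path (rev (y # zs) @ [x])"
    by simp
  also have "\<dots> \<longleftrightarrow>
      path (rev (y # zs)) \<and> path [x] \<and> x \<notin> set (y # zs) \<and> adjacent (last (rev (y # zs))) x"
    by (subst path_append) auto
  also have "\<dots> \<longleftrightarrow> path (x # y # zs)"
    using "3.IH"(2) by (auto simp: path_Cons_Cons last_rev adjacent_sym)
  finally show ?case .
qed (simp_all add: is_path_def)

lemma path_segment:
  assumes "path p" "a \<le> b" "b < length p"
  shows "path (segment p a b)"
proof -
  have "inj_on ((!) p) {a..<Suc b}"
    using assms path_distinct[OF assms(1)] by (intro inj_on_nth) auto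
  then have "distinct (segment p a b)"
    by (simp only: segment_def distinct_map set_upt distinct_upt simp_thms)
  moreover have "set (segment p a b) \<subseteq> V"
    using assms path_subset[OF assms(1)] by (auto simp: set_segment)
  moreover have "adjacent (segment p a b ! n) (segment p a b ! Suc n)"
    if "Suc n < length (segment p a b)" for n
    using assms(1) that assms(2,3) unfolding is_path_def by (simp add: nth_segment)
  ultimately show ?thesis
    using segment_not_Nil[OF assms(2)] unfolding is_path_def by blast
qed

lemma set_inner_path:
  "path p \<Longrightarrow> hd p \<noteq> last p \<Longrightarrow> set (inner p) = set p - {hd p, last p}"
  using set_inner path_distinct path_not_Nil by blast

lemma has_K4_subdivisionI:
  fixes b :: "nat \<Rightarrow> 'a" and Q :: "nat \<Rightarrow> nat \<Rightarrow> 'a list"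
  assumes inj: "inj_on b {..<4}" and "b ` {..<4} \<subseteq> V"
    and Q: "\<And>i j. i < j \<Longrightarrow> j < 4 \<Longrightarrow> path (Q i j) \<and> hd (Q i j) = b i \<and> last (Q i j) = b j"
    and inner_branch: "\<And>i j. i < j \<Longrightarrow> j < 4 \<Longrightarrow> set (inner (Q i j)) \<inter> b ` {..<4} = {}"
    and inner_inner: "\<And>i j k l. i < j \<Longrightarrow> j < 4 \<Longrightarrow> k < l \<Longrightarrow> l < 4 \<Longrightarrow> (i, j) \<noteq> (k, l) \<Longrightarrow>
      set (inner (Q i j)) \<inter> set (inner (Q k l)) = {}"
  shows "has_K4_subdivision V E ends"
  unfolding has_K4_subdivision_def
proof (intro exI[of _ b] exI[of _ Q] conjI allI impI)
  show "inj_on b {..<4}" "b ` {..<4} \<subseteq> V"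
    by fact+
next
  fix i j :: nat
  assume "i < j \<and> j < 4"
  then show "path (Q i j)" "hd (Q i j) = b i" "last (Q i j) = b j"
      "set (inner (Q i j)) \<inter> b ` {..<4} = {}"
    using Q inner_branch by auto
next
  fix i j k l :: nat
  assume ijkl: "i < j \<and> j < 4 \<and> k < l \<and> l < 4 \<and> (i, j) \<noteq> (k, l)"
  have Qkl: "path (Q k l)" "hd (Q k l) = b k" "last (Q k l) = b l"
    using Q[of k l] ijkl by auto
  moreover have "b k \<noteq> b l"
    using inj_on_eq_iff[OF inj, of k l] ijkl by auto
  ultimately have "set (Q k l) = set (inner (Q k l)) \<union> {b k, b l}"
    using set_inner_path[of "Q k l"] hd_in_set[of "Q k l"] last_in_set[of "Q k l"] path_not_Nil[of "Q k l"]
    by auto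
  then show "set (inner (Q i j)) \<inter> set (Q k l) = {}"
    using inner_inner[of i j k l] inner_branch[of i j] ijkl by auto
qed

lemma has_K4_subdivision_chain_chords:
  fixes b :: "nat \<Rightarrow> 'a" and S :: "nat \<Rightarrow> 'a list"
  assumes inj: "inj_on b {..<4}" and b_V: "b ` {..<4} \<subseteq> V"
    and S: "\<And>n. n < 3 \<Longrightarrow> path (S n) \<and> hd (S n) = b n \<and> last (S n) = b (Suc n)"
    and A: "path A" "hd A = b 0" "last A = b 2"
    and B: "path B" "hd B = b 1" "last B = b 3"
    and C: "path C" "hd C = b 0" "last C = b 3"
    and S_branch: "\<And>n. n < 3 \<Longrightarrow> set (inner (S n)) \<inter> b ` {..<4} = {}"
    and S_disjoint: "\<And>m n. m < n \<Longrightarrow> n < 3 \<Longrightarrow> set (inner (S m)) \<inter> set (inner (S n)) = {}"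
    and chords_branch: "(set (inner A) \<union> set (inner B) \<union> set (inner C)) \<inter> b ` {..<4} = {}"
    and S_chords: "\<And>n. n < 3 \<Longrightarrow> (set (inner A) \<union> set (inner B) \<union> set (inner C)) \<inter> set (inner (S n)) = {}"
    and chords_disjoint: "set (inner A) \<inter> set (inner B) = {}" "set (inner A) \<inter> set (inner C) = {}"
      "set (inner B) \<inter> set (inner C) = {}"
  shows "has_K4_subdivision V E ends"
proof -
  define Q where "Q i j = (if j = Suc i then S i else if i = 0 \<and> j = 2 then A else if i = 1 then B else C)"
    for i j
  have Q_chords: "Q 0 2 = A" "Q (Suc 0) 3 = B" "Q 0 3 = C" and Q_chain: "Q n (Suc n) = S n" for n
    by (simp_all add: Q_def)
  have S_disjoint': "set (inner (S m)) \<inter> set (inner (S n)) = {}" if "m \<noteq> n" "m < 3" "n < 3" for m n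
    using S_disjoint[of m n] S_disjoint[of n m] that by (auto simp: linorder_neq_iff Int_commute)
  have S_chords': "set (inner (S n)) \<inter> set (inner A) = {}" "set (inner (S n)) \<inter> set (inner B) = {}"
    "set (inner (S n)) \<inter> set (inner C) = {}" "set (inner A) \<inter> set (inner (S n)) = {}"
    "set (inner B) \<inter> set (inner (S n)) = {}" "set (inner C) \<inter> set (inner (S n)) = {}" if "n < 3" for n
    using S_chords[OF that] by blast+
  have chords_disjoint': "set (inner B) \<inter> set (inner A) = {}" "set (inner C) \<inter> set (inner A) = {}"
    "set (inner C) \<inter> set (inner B) = {}"
    using chords_disjoint by blast+
  have chords_branch': "set (inner A) \<inter> b ` {..<4} = {}" "set (inner B) \<inter> b ` {..<4} = {}"
    "set (inner C) \<inter> b ` {..<4} = {}"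
    using chords_branch by blast+
  have pairs: "j = Suc i \<and> i < 3 \<or> i = 0 \<and> j = 2 \<or> i = 1 \<and> j = 3 \<or> i = 0 \<and> j = 3"
    if "i < j" "j < 4" for i j
    using that by linarith
  show ?thesis
  proof (rule has_K4_subdivisionI[OF inj b_V])
    fix i j :: nat assume "i < j" "j < 4"
    from pairs[OF this] show "path (Q i j) \<and> hd (Q i j) = b i \<and> last (Q i j) = b j"
      by (elim disjE conjE) (simp_all add: Q_chain Q_chords S A B C)
  next
    fix i j :: nat assume "i < j" "j < 4"
    from pairs[OF this] show "set (inner (Q i j)) \<inter> b ` {..<4} = {}"
      by (elim disjE conjE) (simp_all add: Q_chain Q_chords S_branch chords_branch')
  next
    fix i j k l :: nat assume "i < j" "j < 4" "k < l" "l < 4" "(i, j) \<noteq> (k, l)"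
    with pairs[of i j] pairs[of k l] have "(j = Suc i \<and> i < 3 \<or> i = 0 \<and> j = 2 \<or> i = 1 \<and> j = 3 \<or> i = 0 \<and> j = 3) \<and>
      (l = Suc k \<and> k < 3 \<or> k = 0 \<and> l = 2 \<or> k = 1 \<and> l = 3 \<or> k = 0 \<and> l = 3) \<and> (i, j) \<noteq> (k, l)"
      by blast
    then show "set (inner (Q i j)) \<inter> set (inner (Q k l)) = {}"
      by (elim disjE conjE)
        (simp_all add: Q_chain Q_chords S_disjoint' S_chords' chords_disjoint chords_disjoint')
  qed
qed

lemma has_K4_subdivision_from_path:
  assumes P: "path P" and p: "p1 < p2" "p2 < p3" "p3 < p4" "p4 < length P"
    and A: "path A" "hd A = P ! p1" "last A = P ! p3"
    and B: "path B" "hd B = P ! p2" "last B = P ! p4"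
    and C: "path C" "hd C = P ! p1" "last C = P ! p4"
    and off_P: "(set (inner A) \<union> set (inner B) \<union> set (inner C)) \<inter> (!) P ` {p1..p4} = {}"
    and chords_disjoint: "set (inner A) \<inter> set (inner B) = {}" "set (inner A) \<inter> set (inner C) = {}"
      "set (inner B) \<inter> set (inner C) = {}"
  shows "has_K4_subdivision V E ends"
proof -
  define ps where "ps = [p1, p2, p3, p4]"
  define b where "b n = P ! (ps ! n)" for n
  define S where "S n = segment P (ps ! n) (ps ! Suc n)" for n
  have dP: "distinct P"
    using P by (rule path_distinct)
  have sorted: "sorted_wrt (<) ps" and ps_P: "set ps \<subseteq> {..<length P}"
    and ps: "distinct ps" "length ps = 4"
    using p by (auto simp: ps_def)
  have branch: "b ` {..<4} = (!) P ` set ps"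
    by (auto simp: b_def ps_def lessThan_nat_numeral)
  have consecutive: "ps ! n < ps ! Suc n" "p1 \<le> ps ! n" "ps ! Suc n \<le> p4" if "n < 3" for n
  proof -
    have "n = 0 \<or> n = 1 \<or> n = 2"
      using that by auto
    then show "ps ! n < ps ! Suc n" "p1 \<le> ps ! n" "ps ! Suc n \<le> p4"
      using p by (auto simp: ps_def)
  qed
  have "set (inner (S n)) \<subseteq> (!) P ` {p1..p4}" if "n < 3" for n
    using consecutive[OF that] by (auto simp: S_def set_inner_segment)
  then have S_chords: "(set (inner A) \<union> set (inner B) \<union> set (inner C)) \<inter> set (inner (S n)) = {}"
    if "n < 3" for n
    using off_P that by blast
  show ?thesis
  proof (rule has_K4_subdivision_chain_chords[of b S])
    show "inj_on b {..<4}"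
    proof (rule inj_onI)
      fix m n assume "m \<in> {..<4}" "n \<in> {..<4}" "b m = b n"
      then show "m = n"
        using ps dP ps_P nth_mem[of m ps] nth_mem[of n ps]
        by (auto simp: b_def nth_eq_iff_index_eq subset_iff)
    qed
    show "b ` {..<4} \<subseteq> V"
      using path_subset[OF P] ps_P unfolding branch by (auto dest!: nth_mem)
    show "path (S n) \<and> hd (S n) = b n \<and> last (S n) = b (Suc n)" if "n < 3" for n
      using consecutive[OF that] p by (simp add: S_def b_def path_segment[OF P] hd_segment last_segment)
    show "set (inner (S n)) \<inter> b ` {..<4} = {}" if "n < 3" for n
      unfolding S_def branch using inner_segment_disjoint_nodes[OF dP sorted ps_P] that ps by simp
    show "set (inner (S m)) \<inter> set (inner (S n)) = {}" if "m < n" "n < 3" for m n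
      unfolding S_def using inner_segments_disjoint[OF dP sorted ps_P] that ps by simp
    show "(set (inner A) \<union> set (inner B) \<union> set (inner C)) \<inter> b ` {..<4} = {}"
      using off_P p unfolding branch by (auto simp: ps_def)
  qed (use A B C S_chords chords_disjoint in \<open>simp_all add: b_def ps_def\<close>)
qed

end

locale min_valence_three = graph +
  assumes multigraph: "multigraph V E ends"
    and nonempty: "V \<noteq> {}"
    and valence: "v \<in> V \<Longrightarrow> 3 \<le> val V E ends v"
begin

lemma finite_V: "finite V"
  using multigraph by (simp add: multigraph_def)

lemma adjacent_in_V: "adjacent u v \<Longrightarrow> u \<in> V \<and> v \<in> V"
  using multigraph unfolding adj_def multigraph_def by auto

lemma path_edge: "adjacent u v \<Longrightarrow> path [u, v]"
  using adjacent_in_V adjacent_neq by (simp add: path_Cons_Cons)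

lemma length_path_le_card: "path p \<Longrightarrow> length p \<le> card V"
  by (metis card_mono distinct_card finite_V path_distinct path_subset)

lemma third_neighbour:
  assumes "v \<in> V"
  obtains q where "adjacent v q" "q \<noteq> a" "q \<noteq> b"
proof -
  have "\<not> {u \<in> V. adjacent v u} \<subseteq> {a, b}"
  proof
    assume "{u \<in> V. adjacent v u} \<subseteq> {a, b}"
    then have "card {u \<in> V. adjacent v u} \<le> card {a, b}"
      by (intro card_mono) auto
    also have "\<dots> \<le> 2"
      by (cases "a = b") auto
    finally show False
      using valence[OF assms] by (simp add: val_def)
  qed
  then show thesis
    using that by blast
qed

lemma maximal_path_avoiding:
  assumes "q \<in> V" "q \<notin> S"
  obtains X where "path X" "hd X = q" "set X \<inter> S = {}"
    "\<And>u. adjacent (last X) u \<Longrightarrow> u \<in> set X \<union> S"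
proof -
  define R where "R X \<longleftrightarrow> path X \<and> hd X = q \<and> set X \<inter> S = {}" for X
  have "R [q]"
    using assms by (simp add: R_def)
  then obtain X where X: "R X" and longest: "\<And>Y. R Y \<Longrightarrow> length Y \<le> length X"
    using ex_has_greatest_nat[of R "[q]" length "Suc (card V)"] length_path_le_card
    by (auto simp: R_def less_Suc_eq_le)
  have "u \<in> set X \<union> S" if "adjacent (last X) u" for u
  proof (rule ccontr)
    assume "u \<notin> set X \<union> S"
    moreover have "X \<noteq> []"
      using X path_not_Nil by (auto simp: R_def)
    ultimately have "R (X @ [u])"
      using X that adjacent_in_V by (auto simp: R_def path_snoc)
    then show False
      using longest[of "X @ [u]"] by simp
  qed
  then show thesis
    using that X by (auto simp: R_def)
qed

text \<open>As \<open>length p \<le> card V\<close>, the rank orders saturated paths lexicographically by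
  their top back neighbour and then by their length.\<close>

definition saturated :: "'a list \<Rightarrow> bool" where
  "saturated p \<longleftrightarrow> path p \<and> (\<forall>u. adjacent (last p) u \<longrightarrow> u \<in> set p)"

definition back_neighbours :: "'a list \<Rightarrow> nat set" where
  "back_neighbours p = {n. n + 2 < length p \<and> adjacent (last p) (p ! n)}"

definition top_back_neighbour :: "'a list \<Rightarrow> nat" where
  "top_back_neighbour p = Max (back_neighbours p)"

definition rank :: "'a list \<Rightarrow> nat" where
  "rank p = top_back_neighbour p * (card V + 1) + length p"

lemma finite_back_neighbours: "finite (back_neighbours p)"
  by (rule finite_subset[of _ "{..<length p}"]) (auto simp: back_neighbours_def)

lemma two_le_card_back_neighbours:
  assumes "saturated p"
  shows "2 \<le> card (back_neighbours p)"
proof -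
  have p: "path p" and closed: "\<And>u. adjacent (last p) u \<Longrightarrow> u \<in> set p"
    using assms by (auto simp: saturated_def)
  have "p \<noteq> []"
    using p by (rule path_not_Nil)
  define N where "N = {n. n < length p \<and> adjacent (last p) (p ! n)}"
  have "{u \<in> V. adjacent (last p) u} \<subseteq> (!) p ` N"
    using closed by (auto simp: N_def in_set_conv_nth)
  moreover have "finite N"
    by (simp add: N_def)
  ultimately have "card {u \<in> V. adjacent (last p) u} \<le> card ((!) p ` N)"
    by (intro card_mono) auto
  also have "\<dots> \<le> card N"
    using \<open>finite N\<close> by (rule card_image_le)
  also have "N \<subseteq> insert (length p - 2) (back_neighbours p)"
  proof
    fix n assume n: "n \<in> N"
    then have "p ! n \<noteq> last p"
      using adjacent_neq[of "last p" "p ! n"] by (auto simp: N_def)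
    then have "n \<noteq> length p - 1"
      using \<open>p \<noteq> []\<close> by (auto simp: last_conv_nth)
    then show "n \<in> insert (length p - 2) (back_neighbours p)"
      using n by (auto simp: N_def back_neighbours_def)
  qed
  then have "card N \<le> card (insert (length p - 2) (back_neighbours p))"
    using finite_back_neighbours by (intro card_mono) auto
  also have "\<dots> \<le> Suc (card (back_neighbours p))"
    by (simp add: card_insert_if finite_back_neighbours)
  finally show ?thesis
    using valence[of "last p"] path_subset[OF p] last_in_set[OF \<open>p \<noteq> []\<close>]
    by (simp add: val_def subset_iff)
qed

lemma top_back_neighbour_mem: "saturated p \<Longrightarrow> top_back_neighbour p \<in> back_neighbours p"
  unfolding top_back_neighbour_def
  using two_le_card_back_neighbours[of p] by (intro Max_in finite_back_neighbours) auto

lemma le_top_back_neighbour: "n \<in> back_neighbours p \<Longrightarrow> n \<le> top_back_neighbour p"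
  unfolding top_back_neighbour_def using finite_back_neighbours by simp

lemma lower_back_neighbour:
  assumes "saturated p"
  obtains n where "n \<in> back_neighbours p" "n < top_back_neighbour p"
proof -
  have "1 \<le> card (back_neighbours p - {top_back_neighbour p})"
    using two_le_card_back_neighbours[OF assms] finite_back_neighbours top_back_neighbour_mem[OF assms]
    by simp
  then obtain n where "n \<in> back_neighbours p" "n \<noteq> top_back_neighbour p"
    by (metis Diff_iff card.empty ex_in_conv insertI1 not_one_le_zero)
  then show thesis
    using that le_top_back_neighbour[of n p] by simp
qed

lemma rank_less_rank:
  assumes "saturated p"
    and "top_back_neighbour p < top_back_neighbour q \<or>
      top_back_neighbour p \<le> top_back_neighbour q \<and> length p < length q"
  shows "rank p < rank q"
proof -
  have "length p \<le> card V"
    using assms(1) length_path_le_card by (simp add: saturated_def)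
  then show ?thesis
    using assms(2) mult_le_mono1[of "Suc (top_back_neighbour p)" "top_back_neighbour q" "card V + 1"]
      mult_le_mono1[of "top_back_neighbour p" "top_back_neighbour q" "card V + 1"]
    by (auto simp: rank_def)
qed

lemma rank_bounded: "saturated p \<Longrightarrow> rank p < (card V + 1) * (card V + 1)"
proof -
  assume p: "saturated p"
  have "length p \<le> card V"
    using p length_path_le_card by (simp add: saturated_def)
  moreover have "top_back_neighbour p < length p"
    using top_back_neighbour_mem[OF p] by (simp add: back_neighbours_def)
  ultimately have "(top_back_neighbour p + 1) * (card V + 1) \<le> card V * (card V + 1)"
    by (intro mult_le_mono1) simp
  then show ?thesis
    using \<open>length p \<le> card V\<close> by (simp add: rank_def)
qed

lemma saturated_path_exists: "\<exists>p. saturated p"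
proof -
  obtain v where "v \<in> V"
    using nonempty by auto
  then obtain p where "path p" "\<And>u. adjacent (last p) u \<Longrightarrow> u \<in> set p"
    by (rule maximal_path_avoiding[where S = "{}"]) auto
  then show ?thesis
    by (auto simp: saturated_def)
qed

lemma rank_maximal_saturated_path_exists:
  "\<exists>p. saturated p \<and> (\<forall>q. saturated q \<longrightarrow> rank q \<le> rank p)"
  using saturated_path_exists ex_has_greatest_nat[of saturated _ rank "(card V + 1) * (card V + 1)"]
    rank_bounded by blast

end

locale rank_maximal_path = min_valence_three +
  fixes P :: "'a list"
  assumes saturated_P: "saturated P"
    and rank_maximal: "saturated Q \<Longrightarrow> rank Q \<le> rank P"
begin

definition k :: nat where
  "k = length P - 1"

definition j :: nat where
  "j = top_back_neighbour P"

definition i :: nat where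
  "i = (SOME n. n \<in> back_neighbours P \<and> n < j)"

lemma path_P: "path P"
  using saturated_P by (simp add: saturated_def)

lemma distinct_P: "distinct P"
  using path_P by (rule path_distinct)

lemma length_P: "length P = Suc k"
  using path_not_Nil[OF path_P] by (simp add: k_def)

lemma last_P: "last P = P ! k"
  using path_not_Nil[OF path_P] by (simp add: k_def last_conv_nth)

lemma nth_P_eq_iff: "m < length P \<Longrightarrow> n < length P \<Longrightarrow> P ! m = P ! n \<longleftrightarrow> m = n"
  using distinct_P by (simp add: nth_eq_iff_index_eq)

lemma nth_P_in_V: "n < length P \<Longrightarrow> P ! n \<in> V"
  using path_subset[OF path_P] nth_mem by blast

lemma image_nth_P_subset: "N \<subseteq> {..k} \<Longrightarrow> (!) P ` N \<subseteq> set P"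
  using length_P by auto

lemma neighbour_of_last_in_P: "adjacent (P ! k) u \<Longrightarrow> u \<in> set P"
  using saturated_P by (simp add: saturated_def last_P)

lemma j_less: "j + 2 < length P"
  and adjacent_last_j: "adjacent (P ! k) (P ! j)"
  using top_back_neighbour_mem[OF saturated_P] by (auto simp: j_def back_neighbours_def last_P)

lemma le_j: "n + 2 < length P \<Longrightarrow> adjacent (P ! k) (P ! n) \<Longrightarrow> n \<le> j"
  using le_top_back_neighbour[of n P] by (simp add: j_def back_neighbours_def last_P)

lemma i_less_j: "i < j"
  and adjacent_last_i: "adjacent (P ! k) (P ! i)"
proof -
  obtain n where "n \<in> back_neighbours P" "n < j"
    using lower_back_neighbour[OF saturated_P] by (auto simp: j_def)
  then have "i \<in> back_neighbours P \<and> i < j"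
    unfolding i_def by (metis (mono_tags, lifting) someI)
  then show "i < j" "adjacent (P ! k) (P ! i)"
    by (auto simp: back_neighbours_def last_P)
qed

lemma Suc_j_less_k: "Suc j < k"
  using j_less length_P by simp

lemma top_back_neighbour_le_j: "saturated Q \<Longrightarrow> top_back_neighbour Q \<le> j"
  using rank_less_rank[OF saturated_P, of Q] rank_maximal[of Q] by (force simp: j_def)

lemma length_le_length_P: "saturated Q \<Longrightarrow> j \<le> top_back_neighbour Q \<Longrightarrow> length Q \<le> length P"
  using rank_less_rank[OF saturated_P, of Q] rank_maximal[of Q] by (force simp: j_def)

text \<open>An ear of \<open>P\<close> joins \<open>P ! t\<close> to \<open>P ! s\<close> through vertices outside \<open>P\<close>; the last
  conjunct excludes the edges of \<open>P\<close> itself.\<close>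

definition ear :: "nat \<Rightarrow> nat \<Rightarrow> 'a list \<Rightarrow> bool" where
  "ear t s X \<longleftrightarrow> t < length P \<and> s < length P \<and> t \<noteq> s \<and> path (P ! t # X @ [P ! s]) \<and>
     set X \<inter> set P = {} \<and> (X \<noteq> [] \<or> s \<noteq> Suc t \<and> t \<noteq> Suc s)"

lemma ear_rev: "ear t s X \<Longrightarrow> ear s t (rev X)"
  using path_rev[of "P ! t # X @ [P ! s]"] by (auto simp: ear_def)

lemma ear_path:
  assumes "ear t s X"
  shows "path (P ! t # X)" "adjacent (last (P ! t # X)) (P ! s)"
  using assms path_append[of "P ! t # X" "[P ! s]"] by (auto simp: ear_def)

lemma ear_inner_path:
  assumes "ear t s X" "X \<noteq> []"
  shows "path X" "adjacent (P ! t) (hd X)" "adjacent (last X) (P ! s)"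
  using ear_path[OF assms(1)] assms(2) path_append[of "[P ! t]" X] by auto

lemma ear_target_less_k:
  assumes "j < t" "t < k" "ear t s X"
  shows "s < k"
proof (rule ccontr)
  assume "\<not> s < k"
  then have s: "s = k"
    using assms(3) length_P by (auto simp: ear_def)
  show False
  proof (cases "X = []")
    case True
    then have "adjacent (P ! k) (P ! t)"
      using ear_path(2)[OF assms(3)] s adjacent_sym by simp
    moreover have "t + 2 < length P"
      using assms True s length_P by (auto simp: ear_def)
    ultimately show False
      using le_j[of t] assms(1) by simp
  next
    case False
    then have "last X \<in> set P"
      using ear_inner_path(3)[OF assms(3)] s adjacent_sym neighbour_of_last_in_P by blast
    then show False
      using assms(3) last_in_set[OF False] by (auto simp: ear_def)
  qed
qed

text \<open>The detour \<open>X\<close> prolongs \<open>P ! 0, \<dots>, P ! t\<close> to a saturated path whose top back neighbour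
  is at least \<open>t\<close>.\<close>

lemma le_j_if_closed_detour:
  assumes t: "t < length P" and X: "path X" "adjacent (P ! t) (hd X)" "set X \<inter> set P = {}"
    and closed: "\<And>u. adjacent (last X) u \<Longrightarrow> u \<in> set X \<union> set P"
    and only_t: "\<And>s. s < length P \<Longrightarrow> adjacent (last X) (P ! s) \<Longrightarrow> s = t"
  shows "t \<le> j"
proof -
  have "X \<noteq> []"
    using X(1) by (rule path_not_Nil)
  define Q where "Q = segment P 0 t @ X"
  have "set (segment P 0 t) \<subseteq> set P"
    using t by (auto simp: set_segment)
  then have "path Q"
    unfolding Q_def using path_append[of "segment P 0 t" X] path_segment[OF path_P, of 0 t] t X
      \<open>X \<noteq> []\<close> by (auto simp: segment_not_Nil last_segment)
  have last_Q: "last Q = last X"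
    using \<open>X \<noteq> []\<close> by (simp add: Q_def)
  have Q_prefix: "Q ! n = P ! n" if "n \<le> t" for n
    using that by (simp add: Q_def nth_append nth_segment)
  have "saturated Q"
    unfolding saturated_def
  proof (intro conjI allI impI)
    fix u assume u: "adjacent (last Q) u"
    then have "u \<in> set X \<or> u \<in> set P"
      using closed last_Q by auto
    then consider "u \<in> set X" | s where "s < length P" "u = P ! s"
      by (metis in_set_conv_nth)
    then show "u \<in> set Q"
    proof cases
      case (2 s)
      then have "s = t"
        using only_t u last_Q by auto
      then show ?thesis
        using 2 Q_prefix[of t] t by (auto simp: Q_def set_segment)
    qed (simp add: Q_def)
  qed fact
  have "t \<le> top_back_neighbour Q"
  proof (rule ccontr)
    assume "\<not> t \<le> top_back_neighbour Q"
    then have "top_back_neighbour Q < length P" "top_back_neighbour Q \<noteq> t"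
      "Q ! top_back_neighbour Q = P ! top_back_neighbour Q"
      using t Q_prefix[of "top_back_neighbour Q"] by auto
    moreover have "adjacent (last X) (Q ! top_back_neighbour Q)"
      using top_back_neighbour_mem[OF \<open>saturated Q\<close>] last_Q by (simp add: back_neighbours_def)
    ultimately show False
      using only_t by auto
  qed
  then show ?thesis
    using top_back_neighbour_le_j[OF \<open>saturated Q\<close>] by simp
qed

lemma ear_exists:
  assumes "j < t" "t < k"
  obtains s X where "ear t s X"
proof -
  have t: "t < length P" "Suc t < length P"
    using assms length_P by auto
  obtain q where q: "adjacent (P ! t) q" "q \<noteq> P ! (t - 1)" "q \<noteq> P ! Suc t"
    using third_neighbour[OF nth_P_in_V[OF t(1)]] by blast
  show thesis
  proof (cases "q \<in> set P")
    case True
    then obtain s where s: "s < length P" "P ! s = q"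
      by (auto simp: in_set_conv_nth)
    then have "ear t s []"
      using q t adjacent_neq[OF q(1)] path_edge[OF q(1)] by (auto simp: ear_def)
    then show thesis
      by (rule that)
  next
    case False
    obtain X where X: "path X" "hd X = q" "set X \<inter> set P = {}"
      and closed: "\<And>u. adjacent (last X) u \<Longrightarrow> u \<in> set X \<union> set P"
      using maximal_path_avoiding[of q "set P"] False adjacent_in_V[OF q(1)] by blast
    have "X \<noteq> []"
      using X(1) by (rule path_not_Nil)
    obtain s where s: "s < length P" "s \<noteq> t" "adjacent (last X) (P ! s)"
      using le_j_if_closed_detour[OF t(1) X(1) _ X(3) closed] q(1) X(2) assms(1) by force
    have "path (X @ [P ! s])"
      using X \<open>X \<noteq> []\<close> s nth_P_in_V[OF s(1)] by (auto simp: path_snoc)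
    moreover have "P ! t \<notin> set (X @ [P ! s])"
      using X(3) t s by (auto simp: nth_P_eq_iff)
    ultimately have "path ([P ! t] @ X @ [P ! s])"
      using path_append[of "[P ! t]" "X @ [P ! s]"] q(1) X(2) \<open>X \<noteq> []\<close> nth_P_in_V[OF t(1)]
      by auto
    then have "ear t s X"
      using s t X(3) \<open>X \<noteq> []\<close> by (simp add: ear_def)
    then show thesis
      by (rule that)
  qed
qed

text \<open>An ear across an edge of \<open>P\<close> beyond \<open>P ! j\<close> would lengthen \<open>P\<close> without losing the
  back neighbour \<open>j\<close>.\<close>

lemma no_ear_across_edge:
  assumes "j \<le> a" "a < k"
  shows "\<not> ear a (Suc a) X"
proof
  assume ear: "ear a (Suc a) X"
  have "X \<noteq> []"
    using ear by (auto simp: ear_def)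
  note X = ear_inner_path[OF ear this]
  have X_off: "set X \<inter> set P = {}"
    using ear by (simp add: ear_def)
  have k: "k < length P"
    using length_P by simp
  define S1 where "S1 = segment P 0 a"
  define S2 where "S2 = segment P (Suc a) k"
  have S: "path S1" "path S2" "S1 \<noteq> []" "S2 \<noteq> []"
    "last S1 = P ! a" "hd S2 = P ! Suc a" "last S2 = P ! k"
    using assms k by (auto simp: S1_def S2_def path_segment[OF path_P] segment_not_Nil
        hd_segment last_segment)
  have set_S: "set S1 = (!) P ` {0..a}" "set S2 = (!) P ` {Suc a..k}"
    by (simp_all add: S1_def S2_def set_segment)
  have "set S1 \<inter> set S2 = {}"
    unfolding set_S using k assms by (intro image_nth_disjoint[OF distinct_P]) auto
  moreover have "set S1 \<subseteq> set P" "set S2 \<subseteq> set P"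
    unfolding set_S using k assms by auto
  ultimately have "path (S1 @ X @ S2)"
    using S X X_off \<open>X \<noteq> []\<close> path_append[of X S2] path_append[of S1 "X @ S2"] by auto
  define Q where "Q = S1 @ X @ S2"
  have last_Q: "last Q = P ! k"
    using S by (simp add: Q_def)
  have "saturated Q"
    unfolding saturated_def
  proof (intro conjI allI impI)
    fix u assume "adjacent (last Q) u"
    then obtain m where "m < length P" "u = P ! m"
      using neighbour_of_last_in_P last_Q by (auto simp: in_set_conv_nth)
    then have "u \<in> set S1 \<union> set S2"
      unfolding set_S using length_P by (cases "m \<le> a") auto
    then show "u \<in> set Q"
      by (auto simp: Q_def)
  qed (simp add: Q_def \<open>path (S1 @ X @ S2)\<close>)
  have longer: "length P < length Q"
    using \<open>X \<noteq> []\<close> length_P assms by (simp add: Q_def S1_def S2_def)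
  have "Q ! j = P ! j"
    using assms by (simp add: Q_def S1_def nth_append nth_segment)
  then have "j \<in> back_neighbours Q"
    using longer j_less adjacent_last_j last_Q by (simp add: back_neighbours_def)
  then show False
    using length_le_length_P[OF \<open>saturated Q\<close>] le_top_back_neighbour longer by fastforce
qed

text \<open>Follow \<open>X2\<close> up to its first vertex on \<open>X1\<close>, then continue along \<open>X1\<close>.\<close>

lemma ear_splice:
  assumes ear1: "ear x y X1" and ear2: "ear w s X2" and "w \<noteq> y" and "set X1 \<inter> set X2 \<noteq> {}"
  obtains X3 where "ear w y X3"
proof -
  obtain A z B where X2: "X2 = A @ z # B" "z \<in> set X1" "\<forall>a\<in>set A. a \<notin> set X1"
    using split_list_first_prop[of X2 "\<lambda>u. u \<in> set X1"] assms(4) by blast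
  obtain C D where X1: "X1 = C @ z # D"
    using split_list[OF X2(2)] by blast
  have p1: "path ((P ! x # C @ [z]) @ (D @ [P ! y]))"
    using ear1 X1 by (simp add: ear_def)
  have p2: "path ((P ! w # A @ [z]) @ (B @ [P ! s]))"
    using ear2 X2 by (simp add: ear_def)
  have q1: "path (D @ [P ! y])" "adjacent z (hd (D @ [P ! y]))"
    using path_append[of "P ! x # C @ [z]" "D @ [P ! y]"] p1 by auto
  have q2: "path (P ! w # A @ [z])"
    using path_append[of "P ! w # A @ [z]" "B @ [P ! s]"] p2 by auto
  have off: "set X1 \<inter> set P = {}" "set X2 \<inter> set P = {}"
    using ear1 ear2 by (auto simp: ear_def)
  have wy: "w < length P" "y < length P"
    using ear1 ear2 by (auto simp: ear_def)
  have "distinct X1"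
    using path_distinct[OF p1] X1 by auto
  then have "set (P ! w # A @ [z]) \<inter> set (D @ [P ! y]) = {}"
    using X1 X2 off wy \<open>w \<noteq> y\<close> by (auto simp: nth_P_eq_iff)
  then have "path (P ! w # (A @ z # D) @ [P ! y])"
    using path_append[of "P ! w # A @ [z]" "D @ [P ! y]"] q1 q2 by auto
  moreover have "set (A @ z # D) \<inter> set P = {}"
    using off X1 X2 by auto
  ultimately have "ear w y (A @ z # D)"
    using wy \<open>w \<noteq> y\<close> by (simp add: ear_def)
  then show thesis
    by (rule that)
qed

lemma has_K4_subdivision_ear_le_i:
  assumes "j < t" "t < k" "s \<le> i" "ear t s X"
  shows "has_K4_subdivision V E ends"
proof -
  have k: "k < length P"
    using length_P by simp
  have X_off: "set X \<inter> set P = {}"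
    using assms(4) by (simp add: ear_def)
  define A where "A = rev ((P ! t # X) @ segment P s i)"
  have "set (P ! t # X) \<inter> set (segment P s i) = {}"
    using assms i_less_j k X_off by (auto simp: set_segment nth_P_eq_iff)
  then have "path A"
    unfolding A_def path_rev
    using path_append[of "P ! t # X" "segment P s i"] ear_path[OF assms(4)]
      path_segment[OF path_P assms(3)] assms i_less_j k
    by (simp add: segment_not_Nil hd_segment)
  have A_ends: "hd A = P ! i" "last A = P ! t"
    using assms(3) by (simp_all add: A_def segment_not_Nil last_segment hd_rev last_rev)
  have "P ! i \<noteq> P ! t"
    using assms i_less_j k by (simp add: nth_P_eq_iff)
  then have "set (inner A) = (!) P ` {s..i} \<union> set X - {P ! i, P ! t}"
    using set_inner_path[OF \<open>path A\<close>] A_ends by (simp add: A_def set_segment)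
  also have "\<dots> \<subseteq> set X \<union> (!) P ` ({s..i} - {i})"
    using image_diff_subset[of "(!) P" "{s..i}" "{i}"] by auto
  finally have inner_A: "set (inner A) \<subseteq> set X \<union> (!) P ` ({s..i} - {i})" .
  have "(!) P ` ({s..i} - {i}) \<inter> (!) P ` {i..k} = {}"
    using k i_less_j assms by (intro image_nth_disjoint[OF distinct_P]) auto
  moreover have "(!) P ` {i..k} \<subseteq> set P"
    by (rule image_nth_P_subset) auto
  ultimately have "set (inner A) \<inter> (!) P ` {i..k} = {}"
    using X_off inner_A by blast
  then show ?thesis
    using has_K4_subdivision_from_path[OF path_P i_less_j assms(1,2) k \<open>path A\<close> A_ends
        path_edge[OF adjacent_sym[OF adjacent_last_j]] _ _ path_edge[OF adjacent_sym[OF adjacent_last_i]]]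
    by (simp add: inner_def)
qed

lemma has_K4_subdivision_ear_between_i_j:
  assumes "j < t" "t < k" "i < s" "s < j" "ear t s X"
  shows "has_K4_subdivision V E ends"
proof -
  have k: "k < length P"
    using length_P by simp
  have X_off: "set X \<inter> set P = {}"
    using assms(5) by (simp add: ear_def)
  define A where "A = rev (P ! t # X @ [P ! s])"
  define C where "C = rev (segment P i s) @ [P ! k]"
  have "path A"
    using ear_rev[OF assms(5)] by (simp add: A_def ear_def)
  have A_ends: "hd A = P ! s" "last A = P ! t"
    by (simp_all add: A_def hd_rev last_rev)
  have inner_A: "set (inner A) = set X"
    by (simp add: A_def)
  have "P ! k \<notin> set (segment P i s)"
    using assms k by (auto simp: set_segment nth_P_eq_iff)
  then have "path C"
    unfolding C_def using path_snoc[of "rev (segment P i s)" "P ! k"] path_segment[OF path_P, of i s]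
      assms k adjacent_last_i adjacent_sym nth_P_in_V[OF k]
    by (simp add: segment_not_Nil last_rev hd_segment)
  have C_ends: "hd C = P ! s" "last C = P ! k"
    using assms by (simp_all add: C_def hd_rev last_segment segment_not_Nil)
  have "P ! s \<noteq> P ! k"
    using assms k by (simp add: nth_P_eq_iff)
  then have "set (inner C) = insert (P ! k) ((!) P ` {i..s}) - {P ! s, P ! k}"
    using set_inner_path[OF \<open>path C\<close>] C_ends by (simp add: C_def set_segment)
  also have "\<dots> \<subseteq> (!) P ` ({i..s} - {s})"
    using image_diff_subset[of "(!) P" "{i..s}" "{s}"] by auto
  finally have inner_C: "set (inner C) \<subseteq> (!) P ` ({i..s} - {s})" .
  have "(set (inner A) \<union> set (inner [P ! j, P ! k]) \<union> set (inner C)) \<inter> (!) P ` {s..k} = {}"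
    using inner_A inner_C X_off k by (auto simp: inner_def nth_P_eq_iff)
  moreover have "set (inner A) \<inter> set (inner C) = {}"
    using inner_A inner_C X_off assms k by fastforce
  ultimately show ?thesis
    using has_K4_subdivision_from_path[OF path_P assms(4,1,2) k \<open>path A\<close> A_ends
        path_edge[OF adjacent_sym[OF adjacent_last_j]] _ _ \<open>path C\<close> C_ends]
    by (simp add: inner_def)
qed

lemma has_K4_subdivision_crossing_ears:
  assumes "j \<le> a1" "a1 < a2" "a2 < a3" "a3 < a4" "a4 < k"
    and "ear a1 a3 XA" "ear a2 a4 XB" "set XA \<inter> set XB = {}"
  shows "has_K4_subdivision V E ends"
proof -
  have k: "k < length P"
    using length_P by simp
  have off: "set XA \<inter> set P = {}" "set XB \<inter> set P = {}"
    using assms(6,7) by (auto simp: ear_def)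
  define C where "C = rev (segment P j a1) @ rev (segment P a4 k)"
  have "set (segment P j a1) \<inter> set (segment P a4 k) = {}"
    unfolding set_segment using assms k by (intro image_nth_disjoint[OF distinct_P]) auto
  then have "path C"
    unfolding C_def
    using path_append[of "rev (segment P j a1)" "rev (segment P a4 k)"]
      path_segment[OF path_P, of j a1] path_segment[OF path_P, of a4 k] assms k adjacent_last_j adjacent_sym
    by (simp add: segment_not_Nil last_rev hd_rev hd_segment last_segment)
  have C_ends: "hd C = P ! a1" "last C = P ! a4"
    using assms by (simp_all add: C_def hd_rev last_rev last_segment hd_segment segment_not_Nil)
  have "P ! a1 \<noteq> P ! a4"
    using assms k by (simp add: nth_P_eq_iff)
  then have "set (inner C) = ((!) P ` {j..a1} \<union> (!) P ` {a4..k}) - {P ! a1, P ! a4}"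
    using set_inner_path[OF \<open>path C\<close>] C_ends by (simp add: C_def set_segment)
  also have "\<dots> \<subseteq> (!) P ` ({j..a1} \<union> {a4..k} - {a1, a4})"
    using image_diff_subset[of "(!) P" "{j..a1} \<union> {a4..k}" "{a1, a4}"] by auto
  finally have inner_C: "set (inner C) \<subseteq> (!) P ` ({j..a1} \<union> {a4..k} - {a1, a4})" .
  have "{j..a1} \<union> {a4..k} - {a1, a4} \<subseteq> {..k}"
    using assms by auto
  then have C_in_P: "set (inner C) \<subseteq> set P"
    using inner_C image_nth_P_subset by blast
  have "(!) P ` ({j..a1} \<union> {a4..k} - {a1, a4}) \<inter> (!) P ` {a1..a4} = {}"
    using assms k by (intro image_nth_disjoint[OF distinct_P]) auto
  moreover have "(!) P ` {a1..a4} \<subseteq> set P"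
    using assms by (intro image_nth_P_subset) auto
  ultimately have "(set (inner (P ! a1 # XA @ [P ! a3])) \<union> set (inner (P ! a2 # XB @ [P ! a4]))
      \<union> set (inner C)) \<inter> (!) P ` {a1..a4} = {}"
    using inner_C off by auto
  moreover have "set (inner (P ! a1 # XA @ [P ! a3])) \<inter> set (inner C) = {}"
    "set (inner (P ! a2 # XB @ [P ! a4])) \<inter> set (inner C) = {}"
    using C_in_P off by auto
  moreover have "path (P ! a1 # XA @ [P ! a3])" "path (P ! a2 # XB @ [P ! a4])"
    using assms(6,7) by (simp_all add: ear_def)
  ultimately show ?thesis
    using has_K4_subdivision_from_path[OF path_P assms(2-4) _ _ _ _ _ _ _ \<open>path C\<close> C_ends]
      assms(8) k assms(5) by simp
qed

lemma ear_target_window: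
  assumes "\<not> has_K4_subdivision V E ends" "j < t" "t < k" "ear t s X"
  shows "j \<le> s \<and> s < k"
proof -
  have "\<not> s < j"
    using has_K4_subdivision_ear_le_i[OF assms(2,3) _ assms(4)]
      has_K4_subdivision_ear_between_i_j[OF assms(2,3) _ _ assms(4)] assms(1)
    by (meson not_le)
  then show ?thesis
    using ear_target_less_k[OF assms(2-4)] by simp
qed

lemma shorter_window_ear:
  assumes noK: "\<not> has_K4_subdivision V E ends"
    and xy: "j \<le> x" "x < y" "y < k" and X: "ear x y X"
  obtains x' y' X' where "j \<le> x'" "x' < y'" "y' < k" "ear x' y' X'" "y' - x' < y - x"
proof -
  have "y \<noteq> Suc x"
    using no_ear_across_edge[of x X] X xy by auto
  define w where "w = Suc x"
  have w: "j < w" "w < k" "w < y"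
    using xy \<open>y \<noteq> Suc x\<close> by (auto simp: w_def)
  obtain s X2 where X2: "ear w s X2"
    using ear_exists[OF w(1,2)] .
  have s: "j \<le> s" "s < k" "s \<noteq> w"
    using ear_target_window[OF noK w(1,2) X2] X2 by (auto simp: ear_def)
  show thesis
  proof (cases "set X \<inter> set X2 = {}")
    case False
    then obtain X3 where "ear w y X3"
      using ear_splice[OF X X2] w by blast
    then show thesis
      using that[of w y X3] w xy by (simp add: w_def)
  next
    case True
    consider "s < x" | "s = x" | "w < s" "s \<le> y" | "y < s"
      using s w_def by linarith
    then show thesis
    proof cases
      case 1
      have "has_K4_subdivision V E ends"
        by (rule has_K4_subdivision_crossing_ears[OF s(1) 1 _ w(3) xy(3) ear_rev[OF X2] X])
          (use True w_def in auto)
      then show thesis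
        using noK by simp
    next
      case 2
      then have "ear x (Suc x) (rev X2)"
        using ear_rev[OF X2] by (simp add: w_def)
      then show thesis
        using no_ear_across_edge[of x "rev X2"] xy by simp
    next
      case 3
      then show thesis
        using that[of w s X2] X2 w xy by (simp add: w_def)
    next
      case 4
      have "has_K4_subdivision V E ends"
        by (rule has_K4_subdivision_crossing_ears[OF xy(1) _ w(3) 4 s(2) X X2 True])
          (simp add: w_def)
      then show thesis
        using noK by simp
    qed
  qed
qed

theorem has_K4_subdivision: "has_K4_subdivision V E ends"
proof (rule ccontr)
  assume noK: "\<not> has_K4_subdivision V E ends"
  have no_window_ear: "\<not> (j \<le> x \<and> x < y \<and> y < k \<and> ear x y X)" for x y X
  proof (induction "y - x" arbitrary: x y X rule: less_induct)
    case less
    show ?case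
      using shorter_window_ear[OF noK, of x y X] less by metis
  qed
  have "j < k - 1" "k - 1 < k"
    using Suc_j_less_k by auto
  then obtain s X where X: "ear (k - 1) s X"
    by (rule ear_exists)
  then have "j \<le> s" "s < k" "s \<noteq> k - 1"
    using ear_target_window[OF noK \<open>j < k - 1\<close> \<open>k - 1 < k\<close> X] by (auto simp: ear_def)
  then show False
    using no_window_ear[of s "k - 1" "rev X"] no_window_ear[of "k - 1" s X] ear_rev[OF X]
      \<open>j < k - 1\<close> by linarith
qed

end

theorem (in min_valence_three) has_K4_subdivision: "has_K4_subdivision V E ends"
proof -
  obtain P where "saturated P" "\<And>Q. saturated Q \<Longrightarrow> rank Q \<le> rank P"
    using rank_maximal_saturated_path_exists by blast
  then interpret rank_maximal_path V E ends P
    by unfold_locales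
  show ?thesis
    by (rule has_K4_subdivision)
qed

lemma three_le_val_if_not_active:
  assumes "is_counter V E ends C" "v \<in> V" "\<not> active E ends C v"
  shows "3 \<le> val V E ends v"
  using assms by (auto simp: is_counter_def active_def)

theorem lemma7:
  fixes V :: "'a set" and E :: "'e set" and ends :: "'e \<Rightarrow> 'a set" and C :: "'a \<Rightarrow> nat"
  assumes "series_parallel V E ends"
    and "V \<noteq> {}"
    and "is_counter V E ends C"
  shows "\<exists>v\<in>V. active E ends C v"
proof (rule ccontr)
  assume "\<not> (\<exists>v\<in>V. active E ends C v)"
  then have "min_valence_three V E ends"
    using assms three_le_val_if_not_active[OF assms(3)]
    by unfold_locales (auto simp: series_parallel_def)
  then show False
    using min_valence_three.has_K4_subdivision assms(1) by (auto simp: series_parallel_def)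
qed

end
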